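(* Let $f:\mathbb{R}^n\to\mathbb{R}^n$ be locally Lipschitz, and let $V_1,V_2\in C^1(\mathbb{R}^n)$, continuous $N_1,N_2:\mathbb{R}^n\to[0,\infty)$, and continuous $h:[0,\infty)\to[0,\infty)$ with $h(0)=0$ and $\sup_{r>0}h(r)/r<\infty$ satisfy $\nabla V_1\cdot f\le -N_1$ and $\nabla V_2\cdot f\le -N_2+h(N_1)$ on $\mathbb{R}^n$. Let $E:=\{x\in\mathbb{R}^n:N_1(x)=0,\ N_2(x)=0\}$. Let $x(\cdot)$ be a bounded solution defined on $[0,\infty)$ such that $t\mapsto N_i(x(t))$ is uniformly continuous on $[0,\infty)$ for $i=1,2$. Then $\operatorname{dist}(x(t),E)\to0$ as $t\to\infty$.
   Context: $\operatorname{dist}(x,E)=\inf_{e\in E}\|x-e\|$. *)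

theory Defs
  imports "HOL-Analysis.Analysis"
begin

definition locally_lipschitz :: "('a::metric_space \<Rightarrow> 'b::metric_space) \<Rightarrow> bool" where
  "locally_lipschitz f \<longleftrightarrow> (\<forall>x. \<exists>r>0. \<exists>L. L-lipschitz_on (cball x r) f)"

end

theory Submission
  imports Defs
begin

text \<open>Along the solution \<open>V\<^sub>1\<close> decreases at rate at least \<open>N\<^sub>1\<close> and, since \<open>h r \<le> c r\<close>,
  \<open>V\<^sub>2 + c V\<^sub>1\<close> decreases at rate at least \<open>N\<^sub>2\<close>. Both are bounded below on the bounded
  trajectory, so Barbalat's argument with the uniform continuity of \<open>N\<^sub>i(x(t))\<close> gives
  \<open>N\<^sub>i(x(t)) \<rightarrow> 0\<close>. On the compact closure of the trajectory, the continuous function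
  \<open>N\<^sub>1 + N\<^sub>2\<close> is bounded away from zero at distance \<open>\<ge> \<epsilon>\<close> from its zero set \<open>E\<close>, so the
  trajectory eventually stays within \<open>\<epsilon>\<close> of \<open>E\<close>.\<close>

lemma decrease_by_derivative_bound:
  fixes U U' :: "real \<Rightarrow> real"
  assumes deriv: "\<And>\<tau>. \<tau> \<in> S \<Longrightarrow> (U has_real_derivative U' \<tau>) (at \<tau> within S)"
    and "{s..t} \<subseteq> S" and "s \<le> t"
    and bound: "\<And>\<tau>. s \<le> \<tau> \<Longrightarrow> \<tau> \<le> t \<Longrightarrow> U' \<tau> \<le> -e"
  shows "U t + e * (t - s) \<le> U s"
proof -
  have "\<exists>\<xi>\<in>{s..t}. U t - U s = (\<lambda>d. U' \<xi> * d) (t - s)"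
  proof (rule mvt_very_simple[OF \<open>s \<le> t\<close>])
    fix \<xi> assume "s \<le> \<xi>" "\<xi> \<le> t"
    then have "\<xi> \<in> S" using assms(2) by auto
    then have "(U has_real_derivative U' \<xi>) (at \<xi> within {s..t})"
      using DERIV_subset[OF deriv assms(2)] by blast
    then show "(U has_derivative (\<lambda>d. U' \<xi> * d)) (at \<xi> within {s..t})"
      by (simp add: has_field_derivative_def)
  qed
  then obtain \<xi> where "\<xi> \<in> {s..t}" "U t - U s = U' \<xi> * (t - s)" by auto
  moreover have "U' \<xi> * (t - s) \<le> -e * (t - s)"
    using bound[of \<xi>] \<open>\<xi> \<in> {s..t}\<close> \<open>s \<le> t\<close> by (intro mult_right_mono) auto
  ultimately show ?thesis by (simp add: algebra_simps)
qed

lemma dissipation_tendsto_zero: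
  fixes U U' N :: "real \<Rightarrow> real"
  assumes deriv: "\<And>\<tau>. \<tau> \<ge> a \<Longrightarrow> (U has_real_derivative U' \<tau>) (at \<tau> within {a..})"
    and dissip: "\<And>\<tau>. \<tau> \<ge> a \<Longrightarrow> U' \<tau> \<le> - N \<tau>"
    and N_nonneg: "\<And>\<tau>. \<tau> \<ge> a \<Longrightarrow> N \<tau> \<ge> 0"
    and U_bdd: "bdd_below (U ` {a..})"
    and N_uc: "uniformly_continuous_on {a..} N"
  shows "(N \<longlongrightarrow> 0) at_top"
proof (rule tendstoI)
  fix \<epsilon> :: real assume "\<epsilon> > 0"
  have decrease: "U t + e * (t - s) \<le> U s"
    if "a \<le> s" "s \<le> t" "\<And>\<tau>. s \<le> \<tau> \<Longrightarrow> \<tau> \<le> t \<Longrightarrow> U' \<tau> \<le> -e" for s t e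
    using that by (intro decrease_by_derivative_bound[OF deriv]) auto
  have antimono: "U t \<le> U s" if "a \<le> s" "s \<le> t" for s t
  proof -
    have "U' \<tau> \<le> -0" if "s \<le> \<tau>" for \<tau>
      using dissip[of \<tau>] N_nonneg[of \<tau>] that \<open>a \<le> s\<close> by simp
    then show ?thesis using decrease[of s t 0] that by simp
  qed
  obtain \<delta> where "\<delta> > 0"
    and \<delta>: "\<And>s t. s \<ge> a \<Longrightarrow> t \<ge> a \<Longrightarrow> dist s t < \<delta> \<Longrightarrow> dist (N s) (N t) < \<epsilon>/2"
    using N_uc \<open>\<epsilon> > 0\<close> unfolding uniformly_continuous_on_def by (meson atLeast_iff half_gt_zero)
  define d where "d = \<delta>/2"
  have "d > 0" "d < \<delta>" using \<open>\<delta> > 0\<close> by (auto simp: d_def)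
  define L where "L = Inf (U ` {a..})"
  have L_le: "L \<le> U \<tau>" if "\<tau> \<ge> a" for \<tau>
    unfolding L_def using U_bdd that by (intro cInf_lower) auto
  have "L < L + \<epsilon> * d / 4" using \<open>\<epsilon> > 0\<close> \<open>d > 0\<close> by simp
  then obtain T where "T \<ge> a" and T: "U T < L + \<epsilon> * d / 4"
    unfolding L_def by (subst (asm) cInf_less_iff) (use U_bdd in auto)
  have "dist (N t) 0 < \<epsilon>" if "t \<ge> T" for t
  proof (rule ccontr)
    \<comment> \<open>otherwise \<open>N \<ge> \<epsilon>/2\<close> on \<open>[t, t + d]\<close>, so \<open>U (t + d) \<le> U T - \<epsilon> d/2 < L\<close>\<close>
    assume "\<not> dist (N t) 0 < \<epsilon>"
    then have "N t \<ge> \<epsilon>" using N_nonneg[of t] \<open>t \<ge> T\<close> \<open>T \<ge> a\<close> by simp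
    have "U' \<tau> \<le> -(\<epsilon>/2)" if "t \<le> \<tau>" "\<tau> \<le> t + d" for \<tau>
    proof -
      have "dist (N \<tau>) (N t) < \<epsilon>/2"
        using \<delta>[of \<tau> t] that \<open>d < \<delta>\<close> \<open>t \<ge> T\<close> \<open>T \<ge> a\<close> by (simp add: dist_real_def)
      then have "N \<tau> \<ge> \<epsilon>/2"
        using \<open>N t \<ge> \<epsilon>\<close> abs_ge_minus_self[of "N \<tau> - N t"] unfolding dist_real_def by linarith
      then show ?thesis using dissip[of \<tau>] that \<open>t \<ge> T\<close> \<open>T \<ge> a\<close> by simp
    qed
    then have "U (t + d) + \<epsilon>/2 * d \<le> U t"
      using decrease[of t "t + d" "\<epsilon>/2"] \<open>t \<ge> T\<close> \<open>T \<ge> a\<close> \<open>d > 0\<close> by simp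
    moreover have "U t \<le> U T" using antimono \<open>t \<ge> T\<close> \<open>T \<ge> a\<close> by blast
    moreover have "L \<le> U (t + d)" using L_le \<open>t \<ge> T\<close> \<open>T \<ge> a\<close> \<open>d > 0\<close> by simp
    moreover have "\<epsilon> * d > 0" using \<open>\<epsilon> > 0\<close> \<open>d > 0\<close> by simp
    ultimately show False using T by linarith
  qed
  then show "\<forall>\<^sub>F t in at_top. dist (N t) 0 < \<epsilon>"
    unfolding eventually_at_top_linorder by blast
qed

lemma bdd_below_continuous_comp_bounded:
  fixes V :: "'a::heine_borel \<Rightarrow> real"
  assumes "continuous_on UNIV V" and "bounded (x ` S)"
  shows "bdd_below ((\<lambda>t. V (x t)) ` S)"
proof -
  have "compact (V ` closure (x ` S))"
    using assms(2) continuous_on_subset[OF assms(1) subset_UNIV]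
    by (intro compact_continuous_image) simp_all
  then have "bdd_below (V ` closure (x ` S))"
    by (intro bounded_imp_bdd_below compact_imp_bounded)
  moreover have "(\<lambda>t. V (x t)) ` S \<subseteq> V ` closure (x ` S)"
    by (auto intro!: imageI closure_subset[THEN subsetD])
  ultimately show ?thesis by (rule bdd_below_mono)
qed

lemma lyapunov_dissipation_tendsto_zero:
  fixes V N :: "'a::euclidean_space \<Rightarrow> real" and g f :: "'a \<Rightarrow> 'a" and x :: "real \<Rightarrow> 'a"
  assumes grad: "\<And>y. (V has_derivative (\<lambda>v. g y \<bullet> v)) (at y)"
    and dissip: "\<And>y. g y \<bullet> f y \<le> - N y"
    and N_nonneg: "\<And>y. N y \<ge> 0"
    and sol: "\<And>t. t \<ge> a \<Longrightarrow> (x has_vector_derivative f (x t)) (at t within {a..})"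
    and bdd: "bounded (x ` {a..})"
    and uc: "uniformly_continuous_on {a..} (\<lambda>t. N (x t))"
  shows "((\<lambda>t. N (x t)) \<longlongrightarrow> 0) at_top"
proof (rule dissipation_tendsto_zero)
  show "((\<lambda>t. V (x t)) has_real_derivative g (x t) \<bullet> f (x t)) (at t within {a..})"
    if "t \<ge> a" for t
  proof -
    have "((\<lambda>t. V (x t)) has_derivative (\<lambda>s. g (x t) \<bullet> (s *\<^sub>R f (x t)))) (at t within {a..})"
      using has_derivative_compose[OF sol[OF that, unfolded has_vector_derivative_def] grad] .
    then show ?thesis
      by (simp add: has_field_derivative_def mult_commute_abs)
  qed
  have "continuous_on UNIV V"
    using grad by (intro has_derivative_continuous_on) blast
  then show "bdd_below ((\<lambda>t. V (x t)) ` {a..})"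
    using bdd by (rule bdd_below_continuous_comp_bounded)
qed (use dissip N_nonneg uc in auto)

lemma linear_bound_of_bdd_above_ratio:
  fixes h :: "real \<Rightarrow> real"
  assumes "h 0 = 0" and "bdd_above ((\<lambda>r. h r / r) ` {0<..})"
  obtains c where "c \<ge> 0" and "\<And>r. r \<ge> 0 \<Longrightarrow> h r \<le> c * r"
proof -
  obtain M where M: "\<And>r. r > 0 \<Longrightarrow> h r / r \<le> M"
    using assms(2) unfolding bdd_above_def by auto
  have "h r \<le> max 0 M * r" if "r \<ge> 0" for r
  proof (cases "r = 0")
    case False
    then have "h r \<le> M * r" using M[of r] that by (simp add: divide_le_eq)
    also have "\<dots> \<le> max 0 M * r" using that by (intro mult_right_mono) auto
    finally show ?thesis .
  qed (simp add: assms(1))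
  then show ?thesis by (intro that[of "max 0 M"]) auto
qed

lemma eventually_avoids_compact_where_positive:
  fixes N :: "'a::topological_space \<Rightarrow> real"
  assumes "compact C" and "continuous_on C N" and "\<And>y. y \<in> C \<Longrightarrow> N y > 0"
    and "((\<lambda>t. N (x t)) \<longlongrightarrow> 0) F"
  shows "eventually (\<lambda>t. x t \<notin> C) F"
proof (cases "C = {}")
  case False
  then obtain y\<^sub>0 where "y\<^sub>0 \<in> C" and min: "\<And>y. y \<in> C \<Longrightarrow> N y\<^sub>0 \<le> N y"
    using continuous_attains_inf[OF assms(1) _ assms(2)] by blast
  have "eventually (\<lambda>t. N (x t) < N y\<^sub>0) F"
    using order_tendstoD(2)[OF assms(4)] assms(3)[OF \<open>y\<^sub>0 \<in> C\<close>] by blast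
  then show ?thesis
    by eventually_elim (use min in force)
qed simp

lemma bounded_trajectory_tendsto_zero_set:
  fixes N :: "'a::heine_borel \<Rightarrow> real" and x :: "real \<Rightarrow> 'a"
  assumes cont: "continuous_on UNIV N" and N_nonneg: "\<And>y. N y \<ge> 0"
    and bdd: "bounded (x ` {a..})"
    and lim: "((\<lambda>t. N (x t)) \<longlongrightarrow> 0) at_top"
  shows "{y. N y = 0} \<noteq> {} \<and> ((\<lambda>t. infdist (x t) {y. N y = 0}) \<longlongrightarrow> 0) at_top"
proof
  define Z where "Z = {y. N y = 0}"
  define K where "K = closure (x ` {a..})"
  have "compact K" using bdd by (simp add: K_def)
  have in_K: "eventually (\<lambda>t. x t \<in> K) at_top"
    using eventually_ge_at_top[of a]
    by eventually_elim (auto simp: K_def intro!: closure_subset[THEN subsetD])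
  have avoids: "eventually (\<lambda>t. x t \<notin> C) at_top"
    if "closed C" "C \<subseteq> K" "\<And>y. y \<in> C \<Longrightarrow> y \<notin> Z" for C
  proof (rule eventually_avoids_compact_where_positive)
    show "compact C" using \<open>compact K\<close> that by (metis closed_Int_compact inf.absorb1)
    show "continuous_on C N" using cont by (rule continuous_on_subset) simp
    show "\<And>y. y \<in> C \<Longrightarrow> N y > 0"
      using that(3) N_nonneg unfolding Z_def by (metis less_eq_real_def mem_Collect_eq)
    show "((\<lambda>t. N (x t)) \<longlongrightarrow> 0) at_top" by (rule lim)
  qed
  show "Z \<noteq> {}"
  proof
    assume "Z = {}"
    then have "eventually (\<lambda>t. x t \<notin> K) at_top"
      using \<open>compact K\<close> by (intro avoids) (auto intro: compact_imp_closed)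
    with in_K have "eventually (\<lambda>_. False) (at_top :: real filter)"
      by eventually_elim blast
    then show False by simp
  qed
  show "((\<lambda>t. infdist (x t) Z) \<longlongrightarrow> 0) at_top"
  proof (rule tendstoI)
    fix \<epsilon> :: real assume "\<epsilon> > 0"
    have "closed {y. \<epsilon> \<le> infdist y Z}"
      by (intro closed_Collect_le continuous_intros)
    then have "eventually (\<lambda>t. x t \<notin> K \<inter> {y. \<epsilon> \<le> infdist y Z}) at_top"
      using \<open>compact K\<close> \<open>\<epsilon> > 0\<close> by (intro avoids) (auto intro: compact_imp_closed)
    with in_K show "eventually (\<lambda>t. dist (infdist (x t) Z) 0 < \<epsilon>) at_top"
      by eventually_elim (auto simp: infdist_nonneg)
  qed
qed

theorem theorem2p4:
  fixes f :: "'a::euclidean_space \<Rightarrow> 'a"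
    and V1 V2 N1 N2 :: "'a \<Rightarrow> real"
    and gV1 gV2 :: "'a \<Rightarrow> 'a"
    and h :: "real \<Rightarrow> real"
    and x :: "real \<Rightarrow> 'a"
  assumes f_loclip: "locally_lipschitz f"
    and V1_grad: "\<And>y. (V1 has_derivative (\<lambda>v. gV1 y \<bullet> v)) (at y)"
    and V1_C1: "continuous_on UNIV gV1"
    and V2_grad: "\<And>y. (V2 has_derivative (\<lambda>v. gV2 y \<bullet> v)) (at y)"
    and V2_C1: "continuous_on UNIV gV2"
    and N1_cont: "continuous_on UNIV N1" and N1_nonneg: "\<And>y. N1 y \<ge> 0"
    and N2_cont: "continuous_on UNIV N2" and N2_nonneg: "\<And>y. N2 y \<ge> 0"
    and h_cont: "continuous_on {0..} h" and h_nonneg: "\<And>r. r \<ge> 0 \<Longrightarrow> h r \<ge> 0"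
    and h_zero: "h 0 = 0"
    and h_lin: "bdd_above ((\<lambda>r. h r / r) ` {0<..})"
    and dV1: "\<And>y. gV1 y \<bullet> f y \<le> - N1 y"
    and dV2: "\<And>y. gV2 y \<bullet> f y \<le> - N2 y + h (N1 y)"
    and sol: "\<And>t. t \<ge> 0 \<Longrightarrow> (x has_vector_derivative f (x t)) (at t within {0..})"
    and bdd: "bounded (x ` {0..})"
    and uc1: "uniformly_continuous_on {0..} (\<lambda>t. N1 (x t))"
    and uc2: "uniformly_continuous_on {0..} (\<lambda>t. N2 (x t))"
  shows "{y. N1 y = 0 \<and> N2 y = 0} \<noteq> {} \<and>
         ((\<lambda>t. infdist (x t) {y. N1 y = 0 \<and> N2 y = 0}) \<longlongrightarrow> 0) at_top"
proof -
  obtain c where "c \<ge> 0" and h_le: "\<And>r. r \<ge> 0 \<Longrightarrow> h r \<le> c * r"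
    using linear_bound_of_bdd_above_ratio[OF h_zero h_lin] by blast
  have lim1: "((\<lambda>t. N1 (x t)) \<longlongrightarrow> 0) at_top"
    by (rule lyapunov_dissipation_tendsto_zero[OF V1_grad dV1 N1_nonneg sol bdd uc1])
  have combined_grad:
    "((\<lambda>y. V2 y + c * V1 y) has_derivative (\<lambda>v. (gV2 y + c *\<^sub>R gV1 y) \<bullet> v)) (at y)" for y
    using has_derivative_add[OF V2_grad has_derivative_mult_right[OF V1_grad, of c]]
    by (simp add: inner_add_left algebra_simps)
  have combined_dissip: "(gV2 y + c *\<^sub>R gV1 y) \<bullet> f y \<le> - N2 y" for y
    using dV2[of y] mult_left_mono[OF dV1[of y] \<open>c \<ge> 0\<close>] h_le[OF N1_nonneg[of y]]
    by (simp add: inner_add_left)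
  have lim2: "((\<lambda>t. N2 (x t)) \<longlongrightarrow> 0) at_top"
    using combined_grad combined_dissip N2_nonneg sol bdd uc2
    by (rule lyapunov_dissipation_tendsto_zero)
  have "{y. N1 y = 0 \<and> N2 y = 0} = {y. N1 y + N2 y = 0}"
    using add_nonneg_eq_0_iff[OF N1_nonneg N2_nonneg] by blast
  moreover have "{y. N1 y + N2 y = 0} \<noteq> {} \<and>
      ((\<lambda>t. infdist (x t) {y. N1 y + N2 y = 0}) \<longlongrightarrow> 0) at_top"
  proof (rule bounded_trajectory_tendsto_zero_set[OF _ _ bdd])
    show "continuous_on UNIV (\<lambda>y. N1 y + N2 y)"
      using N1_cont N2_cont by (rule continuous_on_add)
    show "\<And>y. N1 y + N2 y \<ge> 0"
      using N1_nonneg N2_nonneg by (rule add_nonneg_nonneg)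
    show "((\<lambda>t. N1 (x t) + N2 (x t)) \<longlongrightarrow> 0) at_top"
      using tendsto_add[OF lim1 lim2] by simp
  qed
  ultimately show ?thesis by simp
qed

end
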